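(* Let $O_1$ be an optimal solution of $I_1$ (assumed to exist). Then the optimal cost of the instance $I_2$ is at most $2\,\mathrm{Cost}_{I_1}(O_1)$.
   Context: An instance of LBUBFL with uniform bounds consists of a finite client set $\mathcal C$, a finite facility set $\mathcal F$, a metric $c$ on $\mathcal C\cup\mathcal F$, opening costs $f_i\ge0$, and integers $1\le\mathcal L\le\mathcal U$; a feasible solution opens $\mathcal F'\subseteq\mathcal F$ and assigns clients by $\sigma:\mathcal C\to\mathcal F'$ with $\mathcal L\le|\sigma^{-1}(i)|\le\mathcal U$ for all $i\in\mathcal F'$, at cost $\sum_{i\in\mathcal F'}f_i+\sum_jc(j,\sigma(j))$. Given a nonempty $\mathcal F^t\subseteq\mathcal F$ and an assignment $\sigma^t:\mathcal C\to\mathcal F^t$, the instance $I_1$ is the LBUBFL instance with the same clients, facilities and bounds, in which client $j$ is relocated to the location of $\sigma^t(j)$ (cost of serving $j$ by $i$ is $c(\sigma^t(j),i)$), with opening costs $f^1_i=0$ for $i\in\mathcal F^t$ and $f^1_i=f_i$ otherwise. The instance $I_2$ is the lower-bounded facility location instance (no upper bound) with facility set $\mathcal F^t$, all opening costs $0$, the same relocated clients, and lower bound $\mathcal L$: a feasible solution opens some $\mathcal F''\subseteq\mathcal F^t$ and assigns each client to an opened facility so that every opened facility receives at least $\mathcal L$ clients; its cost is $\sum_jc(\sigma^t(j),\sigma(j))$. *)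

theory Defs
  imports Complex_Main
begin

definition is_metric_on :: "'a set \<Rightarrow> ('a \<Rightarrow> 'a \<Rightarrow> real) \<Rightarrow> bool" where
  "is_metric_on X d \<longleftrightarrow>
     (\<forall>x\<in>X. d x x = 0) \<and>
     (\<forall>x\<in>X. \<forall>y\<in>X. d x y \<ge> 0 \<and> d x y = d y x) \<and>
     (\<forall>x\<in>X. \<forall>y\<in>X. \<forall>z\<in>X. d x z \<le> d x y + d y z)"

definition points :: "'c set \<Rightarrow> 'f set \<Rightarrow> ('c + 'f) set" where
  "points C F = Inl ` C \<union> Inr ` F"

text \<open>A solution is a pair (opened facilities, assignment).\<close>

definition feasible_LBUB ::
  "'c set \<Rightarrow> 'f set \<Rightarrow> nat \<Rightarrow> nat \<Rightarrow> 'f set \<times> ('c \<Rightarrow> 'f) \<Rightarrow> bool" where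
  "feasible_LBUB C F L U S \<longleftrightarrow>
     fst S \<subseteq> F \<and> (\<forall>j\<in>C. snd S j \<in> fst S) \<and>
     (\<forall>i\<in>fst S. L \<le> card {j\<in>C. snd S j = i} \<and> card {j\<in>C. snd S j = i} \<le> U)"

definition cost_FL ::
  "'c set \<Rightarrow> ('f \<Rightarrow> real) \<Rightarrow> ('c \<Rightarrow> 'f \<Rightarrow> real) \<Rightarrow> 'f set \<times> ('c \<Rightarrow> 'f) \<Rightarrow> real" where
  "cost_FL C fc s S = (\<Sum>i\<in>fst S. fc i) + (\<Sum>j\<in>C. s j (snd S j))"

definition optimal_LBUB ::
  "'c set \<Rightarrow> 'f set \<Rightarrow> ('f \<Rightarrow> real) \<Rightarrow> ('c \<Rightarrow> 'f \<Rightarrow> real) \<Rightarrow> nat \<Rightarrow> nat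
    \<Rightarrow> 'f set \<times> ('c \<Rightarrow> 'f) \<Rightarrow> bool" where
  "optimal_LBUB C F fc s L U S \<longleftrightarrow>
     feasible_LBUB C F L U S \<and>
     (\<forall>S'. feasible_LBUB C F L U S' \<longrightarrow> cost_FL C fc s S \<le> cost_FL C fc s S')"

definition feasible_LB :: "'c set \<Rightarrow> 'f set \<Rightarrow> nat \<Rightarrow> 'f set \<times> ('c \<Rightarrow> 'f) \<Rightarrow> bool" where
  "feasible_LB C F L S \<longleftrightarrow>
     fst S \<subseteq> F \<and> (\<forall>j\<in>C. snd S j \<in> fst S) \<and>
     (\<forall>i\<in>fst S. L \<le> card {j\<in>C. snd S j = i})"

definition opt_cost_LB ::
  "'c set \<Rightarrow> 'f set \<Rightarrow> ('f \<Rightarrow> real) \<Rightarrow> ('c \<Rightarrow> 'f \<Rightarrow> real) \<Rightarrow> nat \<Rightarrow> real" where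
  "opt_cost_LB C F fc s L = Inf {cost_FL C fc s S | S. feasible_LB C F L S}"

text \<open>The instances I_1 and I_2 built from (F^t, sigma^t).\<close>

definition serv_reloc :: "(('c + 'f) \<Rightarrow> ('c + 'f) \<Rightarrow> real) \<Rightarrow> ('c \<Rightarrow> 'f) \<Rightarrow> 'c \<Rightarrow> 'f \<Rightarrow> real" where
  "serv_reloc d \<sigma>t j i = d (Inr (\<sigma>t j)) (Inr i)"

definition open_cost_I1 :: "('f \<Rightarrow> real) \<Rightarrow> 'f set \<Rightarrow> 'f \<Rightarrow> real" where
  "open_cost_I1 fc Ft i = (if i \<in> Ft then 0 else fc i)"

end

theory Submission
  imports Defs
begin

text \<open>Reroute every facility i opened in O1 to a facility \<eta> i of Ft nearest to it, and every
  client along with it. Merging clusters keeps every load at least L. Since a relocated client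
  sits at a point of Ft, which is no closer to i than \<eta> i, the triangle inequality bounds its
  new service cost by twice its service cost in O1. Opening costs in I1 are nonnegative and
  those in I2 vanish, which gives the factor 2.\<close>

lemma feasible_LBUB_imp_feasible_LB:
  "feasible_LBUB C F L U S \<Longrightarrow> feasible_LB C F L S"
  by (simp add: feasible_LBUB_def feasible_LB_def)

lemma feasible_LB_reroute:
  assumes "finite C" and "feasible_LB C F L (S, \<sigma>)" and "\<eta> ` S \<subseteq> F'"
  shows "feasible_LB C F' L (\<eta> ` S, \<eta> \<circ> \<sigma>)"
  unfolding feasible_LB_def
proof (intro conjI ballI)
  show "\<And>j. j \<in> C \<Longrightarrow> snd (\<eta> ` S, \<eta> \<circ> \<sigma>) j \<in> fst (\<eta> ` S, \<eta> \<circ> \<sigma>)"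
    using assms(2) by (auto simp: feasible_LB_def)
  fix k assume "k \<in> fst (\<eta> ` S, \<eta> \<circ> \<sigma>)"
  then obtain i where i: "i \<in> S" "k = \<eta> i" by auto
  have "L \<le> card {j\<in>C. \<sigma> j = i}"
    using assms(2) i(1) by (simp add: feasible_LB_def)
  also have "\<dots> \<le> card {j\<in>C. (\<eta> \<circ> \<sigma>) j = k}"
    by (rule card_mono) (use assms(1) i(2) in auto)
  finally show "L \<le> card {j\<in>C. snd (\<eta> ` S, \<eta> \<circ> \<sigma>) j = k}" by simp
qed (use assms(3) in simp)

lemma metric_dist_to_nearest_le_double:
  assumes "is_metric_on X d" and "a \<in> X" "b \<in> X" "c \<in> X"
    and "d b c \<le> d b a"
  shows "d a c \<le> 2 * d a b"
proof -
  have "d a c \<le> d a b + d b c"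
    using assms(1-4) unfolding is_metric_on_def by blast
  moreover have "d b a = d a b"
    using assms(1-3) unfolding is_metric_on_def by metis
  ultimately show ?thesis using assms(5) by linarith
qed

lemma opt_cost_LB_le_cost:
  assumes "\<And>i. i \<in> F \<Longrightarrow> 0 \<le> fc i"
    and "\<And>j i. j \<in> C \<Longrightarrow> i \<in> F \<Longrightarrow> 0 \<le> s j i"
    and "feasible_LB C F L S"
  shows "opt_cost_LB C F fc s L \<le> cost_FL C fc s S"
proof -
  have "0 \<le> cost_FL C fc s S'" if "feasible_LB C F L S'" for S'
    using that assms(1,2) unfolding feasible_LB_def cost_FL_def
    by (intro add_nonneg_nonneg sum_nonneg) auto
  then have "bdd_below {cost_FL C fc s S' | S'. feasible_LB C F L S'}"
    by (intro bdd_belowI[of _ 0]) blast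
  then show ?thesis
    unfolding opt_cost_LB_def using assms(3) by (intro cInf_lower) blast+
qed

lemma service_cost_le_cost_FL:
  assumes "\<And>i. i \<in> S \<Longrightarrow> 0 \<le> fc i"
  shows "(\<Sum>j\<in>C. s j (\<sigma> j)) \<le> cost_FL C fc s (S, \<sigma>)"
  using sum_nonneg[of S fc] assms by (simp add: cost_FL_def)

theorem lemma3p2:
  fixes C :: "'c set" and F Ft :: "'f set" and d :: "('c + 'f) \<Rightarrow> ('c + 'f) \<Rightarrow> real"
    and fc :: "'f \<Rightarrow> real" and L U :: nat and \<sigma>t :: "'c \<Rightarrow> 'f"
    and O1 :: "'f set \<times> ('c \<Rightarrow> 'f)"
  assumes "finite C" and "finite F"
    and "is_metric_on (points C F) d"
    and "\<forall>i\<in>F. fc i \<ge> 0"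
    and "1 \<le> L" and "L \<le> U"
    and "Ft \<subseteq> F" and "Ft \<noteq> {}"
    and "\<forall>j\<in>C. \<sigma>t j \<in> Ft"
    and "optimal_LBUB C F (open_cost_I1 fc Ft) (serv_reloc d \<sigma>t) L U O1"
  shows "opt_cost_LB C Ft (\<lambda>_. 0) (serv_reloc d \<sigma>t) L
           \<le> 2 * cost_FL C (open_cost_I1 fc Ft) (serv_reloc d \<sigma>t) O1"
proof -
  obtain S \<sigma> where O1: "O1 = (S, \<sigma>)" by fastforce
  have feas: "feasible_LB C F L (S, \<sigma>)"
    using assms(10) O1 by (auto simp: optimal_LBUB_def intro: feasible_LBUB_imp_feasible_LB)
  have finite_Ft: "finite Ft" using assms(2,7) finite_subset by blast
  define \<eta> where "\<eta> i = arg_min_on (\<lambda>k. d (Inr i) (Inr k)) Ft" for i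
  have \<eta>_in: "\<eta> i \<in> Ft" for i
    unfolding \<eta>_def using arg_min_if_finite(1)[OF finite_Ft assms(8)] .
  have \<eta>_nearest: "d (Inr i) (Inr (\<eta> i)) \<le> d (Inr i) (Inr k)" if "k \<in> Ft" for i k
    unfolding \<eta>_def using arg_min_least[OF finite_Ft assms(8) that] .
  have Inr_points: "Inr i \<in> points C F" if "i \<in> F" for i
    using that by (simp add: points_def)
  have serv_nonneg: "0 \<le> serv_reloc d \<sigma>t j i" if "j \<in> C" "i \<in> F" for j i
    using assms(3,7,9) that Inr_points unfolding is_metric_on_def serv_reloc_def by blast
  have reroute: "serv_reloc d \<sigma>t j (\<eta> (\<sigma> j)) \<le> 2 * serv_reloc d \<sigma>t j (\<sigma> j)" if "j \<in> C" for j
    using feas that assms(7,9) \<eta>_in \<eta>_nearest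
    by (auto simp: serv_reloc_def feasible_LB_def
        intro!: metric_dist_to_nearest_le_double[OF assms(3)] Inr_points)
  have "opt_cost_LB C Ft (\<lambda>_. 0) (serv_reloc d \<sigma>t) L \<le> cost_FL C (\<lambda>_. 0) (serv_reloc d \<sigma>t) (\<eta> ` S, \<eta> \<circ> \<sigma>)"
    using assms(7) \<eta>_in
    by (intro opt_cost_LB_le_cost feasible_LB_reroute[OF assms(1) feas] serv_nonneg) auto
  also have "\<dots> \<le> (\<Sum>j\<in>C. 2 * serv_reloc d \<sigma>t j (\<sigma> j))"
    by (simp add: cost_FL_def) (intro sum_mono reroute)
  also have "\<dots> \<le> 2 * cost_FL C (open_cost_I1 fc Ft) (serv_reloc d \<sigma>t) O1"
    unfolding O1 sum_distrib_left[symmetric] using feas assms(4)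
    by (intro mult_left_mono service_cost_le_cost_FL)
       (auto simp: open_cost_I1_def feasible_LB_def)
  finally show ?thesis .
qed

end
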